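(* Let $\nu>0$, $0<K<\nu^2/2$, and let $(\Phi_m)$ satisfy the standing assumptions in the context. Then for every $W\in\mathcal{C}_K$ the gradient $\partial\mathcal{P}(W):=\sum_{m=1}^\infty A_m\Psi_m'(A_mW)$ is well-defined as an element of $\mathsf{L}^2(\mathbb{R})$.
   Context: $A_m f(\xi):=\int_{-m/2}^{m/2} f(\xi+s)\,ds$. $\Psi_m(r):=\Phi_m(\nu m-r)-\Phi_m(\nu m)+\Phi_m'(\nu m)r$ for $r\in[0,\nu m)$. $\mathcal{C}$ is the $\mathsf{L}^2(\mathbb{R})$-closure of $\{W\in C_c^\infty(\mathbb{R}): W(x)=W(-x)\ge0,\ \dot W(x)=-\dot W(-x)\le0\ \forall x\ge0\}$; $\mathcal{C}_K:=\{W\in\mathcal{C}:\frac12\|W\|_2^2=K\}$. Standing assumptions: for every $m$, $\Phi_m:[0,\infty)\to[0,\infty)$, $\Phi_m\in C^4([0,\infty))$, $\Phi_m\ge0,\Phi_m'\le0,\Phi_m''\ge0,\Phi_m'''\le0,\Phi_m^{(4)}\ge0$ (strict for $m=1$, $s>0$); and for a fixed $\gamma\in(5/2,3)$ the series $\sum_m\Phi_m'(\nu m-\sqrt{2Km})m$, $\sum_m\Phi_m''(\nu m-\sqrt{2Km})m^2$, $\sum_m\Phi_m''(\nu m)m^\gamma$, $\sum_m\Phi_m'''(\nu m-\sqrt{2Km})m^{3/2}$ are finite. *)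

theory Defs
  imports "HOL-Analysis.Analysis"
begin

definition Aavg :: "nat \<Rightarrow> (real \<Rightarrow> real) \<Rightarrow> real \<Rightarrow> real" where
  "Aavg m f \<xi> = (LBINT s:{- (real m / 2) .. real m / 2}. f (\<xi> + s))"

text \<open>Psi_m(r) = Phi_m(nu m - r) - Phi_m(nu m) + Phi_m'(nu m) r, where Phi m k denotes
  the k-th derivative of Phi_m (Phi m 0 = Phi_m).\<close>
definition Psi :: "(nat \<Rightarrow> nat \<Rightarrow> real \<Rightarrow> real) \<Rightarrow> real \<Rightarrow> nat \<Rightarrow> real \<Rightarrow> real" where
  "Psi Phi \<nu> m r = Phi m 0 (\<nu> * real m - r) - Phi m 0 (\<nu> * real m) + Phi m 1 (\<nu> * real m) * r"

definition L2 :: "(real \<Rightarrow> real) \<Rightarrow> bool" where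
  "L2 f \<longleftrightarrow> f \<in> borel_measurable lborel \<and> integrable lborel (\<lambda>x. (f x)\<^sup>2)"

definition gen_C :: "(real \<Rightarrow> real) \<Rightarrow> bool" where
  "gen_C W \<longleftrightarrow>
     (\<forall>k x. ((deriv ^^ k) W) differentiable (at x)) \<and>
     bounded {x. W x \<noteq> 0} \<and>
     (\<forall>x\<ge>0. W x = W (-x) \<and> W x \<ge> 0 \<and> deriv W x = - deriv W (-x) \<and> deriv W x \<le> 0)"

definition setC :: "(real \<Rightarrow> real) set" where
  "setC = {W. L2 W \<and> (\<exists>V. (\<forall>n. gen_C (V n)) \<and>
             (\<lambda>n. LINT x|lborel. (V n x - W x)\<^sup>2) \<longlonglongrightarrow> 0)}"

definition setC_K :: "real \<Rightarrow> (real \<Rightarrow> real) set" where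
  "setC_K K = {W \<in> setC. (1/2) * (LINT x|lborel. (W x)\<^sup>2) = K}"

end

theory Submission
  imports Defs
begin

text \<open>Since \<open>W \<ge> 0\<close> a.e. and \<open>\<parallel>W\<parallel>\<^sub>2\<^sup>2 = 2K\<close>, Cauchy--Schwarz gives
  \<open>0 \<le> A\<^sub>m W \<le> sqrt (2Km) < \<nu>m\<close>, the last step because \<open>K < \<nu>\<^sup>2/2\<close>. Hence \<open>\<Psi>\<^sub>m'\<close> is only
  evaluated on \<open>[0, sqrt (2Km)]\<close>, where \<open>\<Psi>\<^sub>m'(r) = \<Phi>\<^sub>m'(\<nu>m) - \<Phi>\<^sub>m'(\<nu>m - r)\<close>, and the signs of
  \<open>\<Phi>\<^sub>m''\<close> and \<open>\<Phi>\<^sub>m'''\<close> give \<open>0 \<le> \<Psi>\<^sub>m'(r) \<le> \<Phi>\<^sub>m''(\<nu>m - sqrt (2Km)) r\<close>. As \<open>A\<^sub>m\<close> has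
  \<open>L\<^sup>2\<close> operator norm at most \<open>m\<close>, the \<open>m\<close>-th term of the series has \<open>L\<^sup>2\<close> norm at most
  \<open>sqrt (2K) m\<^sup>2 \<Phi>\<^sub>m''(\<nu>m - sqrt (2Km))\<close>, which is summable by hypothesis; and a series of
  nonnegative functions with summable \<open>L\<^sup>2\<close> norms converges in \<open>L\<^sup>2\<close>.\<close>

section \<open>Squared \<open>L\<^sup>2\<close> norms and the averaging operator\<close>

abbreviation L2_sqnorm :: "(real \<Rightarrow> real) \<Rightarrow> ennreal" where
  "L2_sqnorm f \<equiv> \<integral>\<^sup>+x. ennreal ((f x)\<^sup>2) \<partial>lborel"

lemma L2_iff_sqnorm_finite: "L2 f \<longleftrightarrow> f \<in> borel_measurable lborel \<and> L2_sqnorm f < \<infinity>"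
proof
  assume "L2 f"
  then show "f \<in> borel_measurable lborel \<and> L2_sqnorm f < \<infinity>"
    unfolding L2_def integrable_iff_bounded by simp
next
  assume *: "f \<in> borel_measurable lborel \<and> L2_sqnorm f < \<infinity>"
  then have [measurable]: "f \<in> borel_measurable lborel" by simp
  show "L2 f"
    unfolding L2_def integrable_iff_bounded using * by simp
qed

lemma L2_sqnorm_eq_integral: "L2 f \<Longrightarrow> L2_sqnorm f = ennreal (LINT x|lborel. (f x)\<^sup>2)"
  unfolding L2_def by (intro nn_integral_eq_integral) auto

lemma L2_sqnorm_translate:
  assumes "h \<in> borel_measurable lborel"
  shows "L2_sqnorm (\<lambda>x. h (x + s)) = L2_sqnorm h"
  using assms nn_integral_real_affine[of "\<lambda>x. ennreal ((h x)\<^sup>2)" 1 s] by (simp add: add.commute)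

lemma measurable_Aavg [measurable]:
  assumes [measurable]: "h \<in> borel_measurable lborel"
  shows "Aavg m h \<in> borel_measurable lborel"
proof -
  have "(\<lambda>x. LINT s|lborel. indicator {- (real m / 2) .. real m / 2} s *\<^sub>R h (x + s))
      \<in> borel_measurable lborel"
    by measurable
  then show ?thesis unfolding Aavg_def[abs_def] set_lebesgue_integral_def by simp
qed

lemma Aavg_nonneg:
  assumes [measurable]: "h \<in> borel_measurable lborel" and "AE x in lborel. 0 \<le> h x"
  shows "0 \<le> Aavg m h \<xi>"
proof -
  have "AE s in lborel. 0 \<le> h (\<xi> + 1 * s)"
    using assms(2) by (intro AE_borel_affine) auto
  then have "AE s in lborel. 0 \<le> indicator {- (real m / 2) .. real m / 2} s *\<^sub>R h (\<xi> + s)"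
    by eventually_elim (simp add: indicator_def)
  then show ?thesis
    unfolding Aavg_def set_lebesgue_integral_def by (rule integral_nonneg_AE)
qed

lemma Aavg_power2_le:
  assumes [measurable]: "h \<in> borel_measurable lborel"
  shows "ennreal ((Aavg m h \<xi>)\<^sup>2)
    \<le> real m * (\<integral>\<^sup>+s. indicator {- (real m / 2) .. real m / 2} s * ennreal ((h (\<xi> + s))\<^sup>2) \<partial>lborel)"
proof -
  let ?I = "{- (real m / 2) .. real m / 2}"
  let ?f = "\<lambda>s. indicator ?I s *\<^sub>R h (\<xi> + s)"
  let ?g = "\<lambda>s. ennreal (indicator ?I s * \<bar>h (\<xi> + s)\<bar>)"
  have abs_le: "ennreal \<bar>Aavg m h \<xi>\<bar> \<le> (\<integral>\<^sup>+s. ?g s \<partial>lborel)"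
  proof (cases "integrable lborel ?f")
    case True
    have "ennreal \<bar>Aavg m h \<xi>\<bar> = ennreal (norm (integral\<^sup>L lborel ?f))"
      unfolding Aavg_def set_lebesgue_integral_def by simp
    also have "\<dots> \<le> (\<integral>\<^sup>+s. norm (?f s) \<partial>lborel)"
      using integral_norm_bound_ennreal[OF True] by simp
    also have "\<dots> = (\<integral>\<^sup>+s. ?g s \<partial>lborel)"
      by (intro nn_integral_cong) (auto simp: indicator_def)
    finally show ?thesis .
  next
    case False
    then show ?thesis
      unfolding Aavg_def set_lebesgue_integral_def by (simp add: not_integrable_integral_eq)
  qed
  have "ennreal ((Aavg m h \<xi>)\<^sup>2) = (ennreal \<bar>Aavg m h \<xi>\<bar>)\<^sup>2"
    by (subst ennreal_power) auto
  also have "\<dots> \<le> (\<integral>\<^sup>+s. ?g s \<partial>lborel)\<^sup>2"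
    using abs_le by (intro power_mono) auto
  also have "\<dots> = (\<integral>\<^sup>+s. ?g s * indicator ?I s \<partial>lborel)\<^sup>2"
    by (intro arg_cong[where f="\<lambda>z. z\<^sup>2"] nn_integral_cong) (auto simp: indicator_def)
  also have "\<dots> \<le> (\<integral>\<^sup>+s. (?g s)\<^sup>2 \<partial>lborel) * (\<integral>\<^sup>+s. (indicator ?I s)\<^sup>2 \<partial>lborel)"
    by (rule Cauchy_Schwarz_nn_integral) auto
  also have "(\<integral>\<^sup>+s. (indicator ?I s :: ennreal)\<^sup>2 \<partial>lborel) = real m"
  proof -
    have "(\<lambda>s. (indicator ?I s :: ennreal)\<^sup>2) = indicator ?I"
      by (auto simp: fun_eq_iff indicator_def)
    then show ?thesis by simp
  qed
  also have "(\<integral>\<^sup>+s. (?g s)\<^sup>2 \<partial>lborel)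
      = (\<integral>\<^sup>+s. indicator ?I s * ennreal ((h (\<xi> + s))\<^sup>2) \<partial>lborel)"
    by (intro nn_integral_cong) (auto simp: indicator_def ennreal_power)
  finally show ?thesis by (simp add: mult.commute)
qed

lemma Aavg_power2_le_integral:
  assumes "L2 h"
  shows "(Aavg m h \<xi>)\<^sup>2 \<le> real m * (LINT x|lborel. (h x)\<^sup>2)"
proof -
  have [measurable]: "h \<in> borel_measurable lborel" using assms by (simp add: L2_def)
  have "ennreal ((Aavg m h \<xi>)\<^sup>2)
      \<le> real m * (\<integral>\<^sup>+s. indicator {- (real m / 2) .. real m / 2} s * ennreal ((h (\<xi> + s))\<^sup>2) \<partial>lborel)"
    by (rule Aavg_power2_le) simp
  also have "\<dots> \<le> real m * (\<integral>\<^sup>+s. ennreal ((h (s + \<xi>))\<^sup>2) \<partial>lborel)"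
    by (intro mult_left_mono nn_integral_mono) (auto simp: indicator_def add.commute)
  also have "\<dots> = ennreal (real m * (LINT x|lborel. (h x)\<^sup>2))"
    using assms
    by (simp add: L2_sqnorm_translate L2_sqnorm_eq_integral ennreal_mult integral_nonneg_AE)
  finally show ?thesis
    by (rule ennreal_le_iff[THEN iffD1, rotated]) (simp add: integral_nonneg_AE)
qed

text \<open>Young's inequality: \<open>A\<^sub>m\<close> is convolution with an indicator of \<open>L\<^sup>1\<close>-norm \<open>m\<close>.\<close>
lemma L2_sqnorm_Aavg_le:
  assumes [measurable]: "h \<in> borel_measurable lborel"
  shows "L2_sqnorm (Aavg m h) \<le> (real m)\<^sup>2 * L2_sqnorm h"
proof -
  let ?I = "{- (real m / 2) .. real m / 2}"
  have "L2_sqnorm (Aavg m h) \<le>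
      (\<integral>\<^sup>+x. real m * (\<integral>\<^sup>+s. indicator ?I s * ennreal ((h (x + s))\<^sup>2) \<partial>lborel) \<partial>lborel)"
    by (intro nn_integral_mono Aavg_power2_le) simp
  also have "\<dots> = real m * (\<integral>\<^sup>+s. (\<integral>\<^sup>+x. indicator ?I s * ennreal ((h (x + s))\<^sup>2) \<partial>lborel) \<partial>lborel)"
    by (subst lborel_pair.Fubini') (measurable, rule nn_integral_cmult, measurable)
  also have "\<dots> = real m * (\<integral>\<^sup>+s. indicator ?I s * L2_sqnorm h \<partial>lborel)"
    by (simp add: nn_integral_cmult L2_sqnorm_translate)
  also have "\<dots> = (real m)\<^sup>2 * L2_sqnorm h"
    by (simp add: nn_integral_multc power2_eq_square ennreal_mult mult.assoc)
  finally show ?thesis .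
qed

lemma L2_Aavg: "L2 h \<Longrightarrow> L2 (Aavg m h)"
  using L2_sqnorm_Aavg_le[of h m] by (auto simp: L2_iff_sqnorm_finite ennreal_mult_less_top
      intro: le_less_trans)

lemma L2_sqnorm_le_dominated:
  assumes [measurable]: "f \<in> borel_measurable lborel" and "\<And>x. \<bar>g x\<bar> \<le> c * \<bar>f x\<bar>"
  shows "L2_sqnorm g \<le> ennreal (c\<^sup>2) * L2_sqnorm f"
proof -
  have "L2_sqnorm g \<le> (\<integral>\<^sup>+x. ennreal (c\<^sup>2) * ennreal ((f x)\<^sup>2) \<partial>lborel)"
  proof (intro nn_integral_mono)
    fix x
    have "\<bar>g x\<bar>\<^sup>2 \<le> (c * \<bar>f x\<bar>)\<^sup>2" using assms(2)[of x] by (intro power_mono) auto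
    then show "ennreal ((g x)\<^sup>2) \<le> ennreal (c\<^sup>2) * ennreal ((f x)\<^sup>2)"
      by (simp add: ennreal_mult[symmetric] power_mult_distrib)
  qed
  also have "\<dots> = ennreal (c\<^sup>2) * L2_sqnorm f"
    by (rule nn_integral_cmult) measurable
  finally show ?thesis .
qed

lemma borel_measurable_continuous_on_comp:
  fixes f :: "'a::topological_space \<Rightarrow> 'b::real_normed_vector"
  assumes "continuous_on S f" "closed S" "g \<in> borel_measurable M" "\<And>x. x \<in> space M \<Longrightarrow> g x \<in> S"
  shows "(\<lambda>x. f (g x)) \<in> borel_measurable M"
proof -
  have "(\<lambda>y. indicator S y *\<^sub>R f y) \<in> borel_measurable borel"
    using assms(1,2) by (intro borel_measurable_continuous_on_indicator) auto
  then have "(\<lambda>x. indicator S (g x) *\<^sub>R f (g x)) \<in> borel_measurable M"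
    using assms(3) by (rule measurable_compose[rotated])
  then show ?thesis
    by (rule measurable_cong[THEN iffD1, rotated]) (simp add: assms(4))
qed

lemma L2_diff:
  assumes "L2 f" "L2 g"
  shows "L2 (\<lambda>x. f x - g x)"
proof -
  have [measurable]: "f \<in> borel_measurable lborel" "g \<in> borel_measurable lborel"
    using assms by (auto simp: L2_def)
  have "L2_sqnorm (\<lambda>x. f x - g x) \<le> (\<integral>\<^sup>+x. ennreal (2 * (f x)\<^sup>2) + ennreal (2 * (g x)\<^sup>2) \<partial>lborel)"
  proof (intro nn_integral_mono)
    fix x
    have "(f x - g x)\<^sup>2 \<le> 2 * (f x)\<^sup>2 + 2 * (g x)\<^sup>2"
      using sum_squares_ge_zero[of "f x + g x" 0] by (simp add: power2_eq_square algebra_simps)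
    then show "ennreal ((f x - g x)\<^sup>2) \<le> ennreal (2 * (f x)\<^sup>2) + ennreal (2 * (g x)\<^sup>2)"
      by (simp add: ennreal_plus[symmetric] del: ennreal_plus)
  qed
  also have "\<dots> = 2 * L2_sqnorm f + 2 * L2_sqnorm g"
    by (simp add: nn_integral_add nn_integral_cmult ennreal_mult)
  also have "\<dots> < \<infinity>"
    using assms by (simp add: L2_iff_sqnorm_finite ennreal_mult_less_top)
  finally show ?thesis by (simp add: L2_iff_sqnorm_finite)
qed

section \<open>The cone \<open>\<C>\<close>\<close>

lemma gen_C_nonneg:
  assumes "gen_C V"
  shows "0 \<le> V x"
  using assms unfolding gen_C_def by (cases "x \<ge> 0") (auto dest: spec[of _ "-x"])

lemma L2_gen_C:
  assumes "gen_C V"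
  shows "L2 V"
proof -
  have "V differentiable (at x)" for x
    using assms unfolding gen_C_def by (metis funpow_0)
  then have cont: "continuous_on UNIV V"
    by (simp add: continuous_at_imp_continuous_on differentiable_imp_continuous_within)
  obtain R where R: "\<And>x. V x \<noteq> 0 \<Longrightarrow> x \<in> cball 0 R"
    using assms unfolding gen_C_def bounded_iff by (auto simp: mem_cball dist_norm)
  have "integrable lborel (\<lambda>x. indicator (cball 0 R) x *\<^sub>R (V x)\<^sup>2)"
    by (rule borel_integrable_compact) (auto intro!: continuous_intros continuous_on_subset[OF cont])
  also have "(\<lambda>x. indicator (cball 0 R) x *\<^sub>R (V x)\<^sup>2) = (\<lambda>x. (V x)\<^sup>2)"
    using R by (auto simp: indicator_def fun_eq_iff)
  finally show ?thesis
    unfolding L2_def using cont borel_measurable_continuous_onI by simp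
qed

text \<open>On \<open>{W < 0}\<close> every nonnegative \<open>V\<close> satisfies \<open>W\<^sup>2 \<le> (V - W)\<^sup>2\<close>, so the
  \<open>L\<^sup>2\<close>-approximation forces \<open>W\<^sup>2\<close> to have zero integral there. Integrability of
  \<open>(V - W)\<^sup>2\<close> matters, since for a non-integrable function \<open>LINT\<close> is the junk value \<open>0\<close>.\<close>
lemma setC_AE_nonneg:
  assumes "W \<in> setC"
  shows "AE x in lborel. 0 \<le> W x"
proof -
  obtain V where V: "\<And>n. gen_C (V n)" and lim: "(\<lambda>n. LINT x|lborel. (V n x - W x)\<^sup>2) \<longlonglongrightarrow> 0"
    and LW: "L2 W"
    using assms unfolding setC_def by blast
  have [measurable]: "W \<in> borel_measurable lborel" using LW by (simp add: L2_def)
  let ?q = "\<integral>\<^sup>+x. indicator {x. W x < 0} x * ennreal ((W x)\<^sup>2) \<partial>lborel"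
  have "?q \<le> ennreal (LINT x|lborel. (V n x - W x)\<^sup>2)" for n
  proof -
    have "?q \<le> L2_sqnorm (\<lambda>x. V n x - W x)"
    proof (intro nn_integral_mono)
      fix x
      have "(W x)\<^sup>2 \<le> (V n x - W x)\<^sup>2" if "W x < 0"
        using power_mono[of "- W x" "V n x - W x" 2] gen_C_nonneg[OF V, of n x] that by simp
      then show "indicator {x. W x < 0} x * ennreal ((W x)\<^sup>2) \<le> ennreal ((V n x - W x)\<^sup>2)"
        by (simp add: indicator_def)
    qed
    also have "\<dots> = ennreal (LINT x|lborel. (V n x - W x)\<^sup>2)"
      by (intro L2_sqnorm_eq_integral L2_diff L2_gen_C V LW)
    finally show ?thesis .
  qed
  moreover have "(\<lambda>n. ennreal (LINT x|lborel. (V n x - W x)\<^sup>2)) \<longlonglongrightarrow> ennreal 0"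
    using lim by (rule tendsto_ennrealI)
  ultimately have "?q \<le> ennreal 0"
    by (intro LIMSEQ_le_const[of _ "ennreal 0"]) auto
  then have "?q = 0" by simp
  then have "AE x in lborel. indicator {x. W x < 0} x * ennreal ((W x)\<^sup>2) = 0"
    by (subst (asm) nn_integral_0_iff_AE) auto
  then show ?thesis
    by eventually_elim (auto simp: indicator_def split: if_splits)
qed

lemma setC_K_nonneg:
  assumes "W \<in> setC_K K"
  shows "0 \<le> K"
  using assms integral_nonneg_AE[of "\<lambda>x. (W x)\<^sup>2" lborel] by (simp add: setC_K_def)

lemma setC_K_Aavg_bounds:
  assumes "W \<in> setC_K K"
  shows "0 \<le> Aavg m W \<xi>" "Aavg m W \<xi> \<le> sqrt (2 * K * real m)"
proof -
  have C: "W \<in> setC" and K: "LINT x|lborel. (W x)\<^sup>2 = 2 * K"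
    using assms unfolding setC_K_def by auto
  have LW: "L2 W" using C unfolding setC_def by blast
  then have [measurable]: "W \<in> borel_measurable lborel" by (simp add: L2_def)
  show "0 \<le> Aavg m W \<xi>"
    using setC_AE_nonneg[OF C] by (rule Aavg_nonneg[rotated]) simp
  show "Aavg m W \<xi> \<le> sqrt (2 * K * real m)"
    using Aavg_power2_le_integral[OF LW, of m \<xi>] K by (intro real_le_rsqrt) (simp add: mult_ac)
qed

section \<open>The terms of the gradient series\<close>

lemma nondecreasing_concave_increment_bounds:
  fixes f f' f'' :: "real \<Rightarrow> real"
  assumes "t \<le> y" "y \<le> z"
    and f: "\<And>x. t \<le> x \<Longrightarrow> x \<le> z \<Longrightarrow> (f has_real_derivative f' x) (at x)"
    and f': "\<And>x. t \<le> x \<Longrightarrow> x \<le> z \<Longrightarrow> (f' has_real_derivative f'' x) (at x)"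
    and f'_nonneg: "\<And>x. t \<le> x \<Longrightarrow> x \<le> z \<Longrightarrow> 0 \<le> f' x"
    and f''_nonpos: "\<And>x. t \<le> x \<Longrightarrow> x \<le> z \<Longrightarrow> f'' x \<le> 0"
  shows "0 \<le> f z - f y \<and> f z - f y \<le> f' t * (z - y)"
proof (cases "y = z")
  case False
  then have "y < z" using assms(2) by simp
  then obtain \<zeta> where \<zeta>: "y < \<zeta>" "\<zeta> < z" "f z - f y = (z - y) * f' \<zeta>"
    using MVT2[of y z f f'] f assms(1) by auto
  have "f' \<zeta> \<le> f' t"
  proof (rule DERIV_nonpos_imp_nonincreasing[where f = f'])
    show "t \<le> \<zeta>" using \<zeta> assms(1) by linarith
    fix x assume "t \<le> x" "x \<le> \<zeta>"
    then have "x \<le> z" using \<zeta> by linarith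
    then show "\<exists>D. (f' has_real_derivative D) (at x) \<and> D \<le> 0"
      using f'[of x] f''_nonpos[of x] \<open>t \<le> x\<close> by blast
  qed
  moreover have "0 \<le> f' \<zeta>" using f'_nonneg[of \<zeta>] \<zeta> assms(1) by linarith
  ultimately show ?thesis
    using \<zeta>(3) \<open>y < z\<close> mult_left_mono[of "f' \<zeta>" "f' t" "z - y"] by (simp add: mult.commute)
qed simp

lemma has_real_derivative_at_of_within_nonneg:
  assumes "(f has_real_derivative D) (at x within {0..})" "0 < x"
  shows "(f has_real_derivative D) (at x)"
proof -
  have "at x within {0..} = at x" using assms(2) by (intro at_within_interior) simp
  then show ?thesis using assms(1) by simp
qed

lemma deriv_Psi:
  assumes "(Phi m 0 has_real_derivative Phi m 1 (\<nu> * real m - r)) (at (\<nu> * real m - r))"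
  shows "deriv (Psi Phi \<nu> m) r = Phi m 1 (\<nu> * real m) - Phi m 1 (\<nu> * real m - r)"
proof -
  have "((\<lambda>r. Phi m 0 (\<nu> * real m - r)) has_real_derivative Phi m 1 (\<nu> * real m - r) * (- 1)) (at r)"
    using DERIV_chain2[where f = "Phi m 0" and g = "\<lambda>r. \<nu> * real m - r", OF assms
        DERIV_diff[OF DERIV_const DERIV_ident]]
    by simp
  then have "(Psi Phi \<nu> m has_real_derivative
      Phi m 1 (\<nu> * real m - r) * (- 1) - 0 + Phi m 1 (\<nu> * real m) * 1) (at r)"
    unfolding Psi_def[abs_def] by (intro DERIV_add DERIV_diff DERIV_cmult DERIV_const DERIV_ident)
  then show ?thesis by (simp add: DERIV_imp_deriv)
qed

text \<open>The sign conditions on \<open>\<Phi>\<^sub>m''\<close> and \<open>\<Phi>\<^sub>m'''\<close> make \<open>\<Phi>\<^sub>m'\<close> nondecreasing and concave,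
  so \<open>\<Psi>\<^sub>m'\<close> is controlled by \<open>\<Phi>\<^sub>m''\<close> at the left end of the range of \<open>\<nu>m - r\<close>.\<close>
lemma deriv_Psi_bounds:
  assumes deriv: "\<And>k x. k < 4 \<Longrightarrow> x \<ge> 0 \<Longrightarrow>
               (Phi m k has_real_derivative Phi m (Suc k) x) (at x within {0..})"
    and signs: "\<And>k x. k \<le> 4 \<Longrightarrow> x \<ge> 0 \<Longrightarrow> (-1) ^ k * Phi m k x \<ge> 0"
    and r: "0 \<le> r" "r \<le> \<rho>" and \<rho>: "\<rho> < \<nu> * real m"
  shows "deriv (Psi Phi \<nu> m) r = Phi m 1 (\<nu> * real m) - Phi m 1 (\<nu> * real m - r)"
    and "0 \<le> deriv (Psi Phi \<nu> m) r"
    and "deriv (Psi Phi \<nu> m) r \<le> Phi m 2 (\<nu> * real m - \<rho>) * r"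
proof -
  have D: "(Phi m k has_real_derivative Phi m (Suc k) x) (at x)" if "k < 4" "0 < x" for k x
    using deriv[of k x] that by (intro has_real_derivative_at_of_within_nonneg) auto
  show eq: "deriv (Psi Phi \<nu> m) r = Phi m 1 (\<nu> * real m) - Phi m 1 (\<nu> * real m - r)"
    using D[of 0 "\<nu> * real m - r"] r \<rho> by (intro deriv_Psi) simp
  have "0 \<le> Phi m 1 (\<nu> * real m) - Phi m 1 (\<nu> * real m - r) \<and>
      Phi m 1 (\<nu> * real m) - Phi m 1 (\<nu> * real m - r)
        \<le> Phi m 2 (\<nu> * real m - \<rho>) * (\<nu> * real m - (\<nu> * real m - r))"
  proof (rule nondecreasing_concave_increment_bounds[where f = "Phi m 1" and f' = "Phi m 2" and f'' = "Phi m 3"])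
    fix x assume "\<nu> * real m - \<rho> \<le> x" "x \<le> \<nu> * real m"
    then have "0 < x" using \<rho> by linarith
    then show "(Phi m 1 has_real_derivative Phi m 2 x) (at x)"
      and "(Phi m 2 has_real_derivative Phi m 3 x) (at x)"
      and "0 \<le> Phi m 2 x" and "Phi m 3 x \<le> 0"
      using D[of 1 x] D[of 2 x] signs[of 2 x] signs[of 3 x]
      by (simp_all add: numeral_2_eq_2 numeral_3_eq_3)
  qed (use r in auto)
  then show "0 \<le> deriv (Psi Phi \<nu> m) r" "deriv (Psi Phi \<nu> m) r \<le> Phi m 2 (\<nu> * real m - \<rho>) * r"
    by (auto simp: eq)
qed

lemma sqrt_2Km_less:
  fixes \<nu> K :: real
  assumes "0 < \<nu>" "K < \<nu>\<^sup>2 / 2" "1 \<le> m"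
  shows "sqrt (2 * K * real m) < \<nu> * real m"
proof -
  have "2 * K * real m < \<nu>\<^sup>2 * real m"
    using assms by (intro mult_strict_right_mono) auto
  also have "\<dots> \<le> \<nu>\<^sup>2 * (real m)\<^sup>2"
    using assms(3) by (intro mult_left_mono) (auto simp: power2_eq_square)
  also have "\<dots> = (\<nu> * real m)\<^sup>2"
    by (simp add: power_mult_distrib)
  finally show ?thesis
    using assms(1,3) real_sqrt_less_mono by fastforce
qed

lemma Psi_deriv_Aavg_bounds:
  assumes deriv: "\<And>k x. k < 4 \<Longrightarrow> x \<ge> 0 \<Longrightarrow>
               (Phi m k has_real_derivative Phi m (Suc k) x) (at x within {0..})"
    and signs: "\<And>k x. k \<le> 4 \<Longrightarrow> x \<ge> 0 \<Longrightarrow> (-1) ^ k * Phi m k x \<ge> 0"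
    and W: "W \<in> setC_K K" and lt: "sqrt (2 * K * real m) < \<nu> * real m"
  shows "(\<lambda>\<xi>. deriv (Psi Phi \<nu> m) (Aavg m W \<xi>)) \<in> borel_measurable lborel"
    and "0 \<le> deriv (Psi Phi \<nu> m) (Aavg m W \<xi>)"
    and "deriv (Psi Phi \<nu> m) (Aavg m W \<xi>)
      \<le> Phi m 2 (\<nu> * real m - sqrt (2 * K * real m)) * Aavg m W \<xi>"
proof -
  let ?A = "Aavg m W"
  have LW: "L2 W" using W unfolding setC_K_def setC_def by auto
  then have [measurable]: "W \<in> borel_measurable lborel" by (simp add: L2_def)
  note bounds = deriv_Psi_bounds[of Phi m, OF deriv signs
      setC_K_Aavg_bounds(1)[OF W] setC_K_Aavg_bounds(2)[OF W] lt]
  show "0 \<le> deriv (Psi Phi \<nu> m) (?A \<xi>)"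
    by (rule bounds(2))
  show "deriv (Psi Phi \<nu> m) (?A \<xi>) \<le> Phi m 2 (\<nu> * real m - sqrt (2 * K * real m)) * ?A \<xi>"
    by (rule bounds(3))
  have "continuous_on {0..} (Phi m 1)"
    using deriv[of 1] by (intro DERIV_continuous_on) auto
  then have "(\<lambda>\<xi>. Phi m 1 (\<nu> * real m - ?A \<xi>)) \<in> borel_measurable lborel"
  proof (rule borel_measurable_continuous_on_comp[where g = "\<lambda>\<xi>. \<nu> * real m - ?A \<xi>"])
    show "\<nu> * real m - ?A \<xi> \<in> {0..}" for \<xi>
      using setC_K_Aavg_bounds(2)[OF W, of m \<xi>] lt by simp
  qed auto
  then show "(\<lambda>\<xi>. deriv (Psi Phi \<nu> m) (?A \<xi>)) \<in> borel_measurable lborel"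
    by (simp add: bounds(1) cong: measurable_cong)
qed

lemma Psi_gradient_term:
  assumes deriv: "\<And>k x. k < 4 \<Longrightarrow> x \<ge> 0 \<Longrightarrow>
               (Phi m k has_real_derivative Phi m (Suc k) x) (at x within {0..})"
    and signs: "\<And>k x. k \<le> 4 \<Longrightarrow> x \<ge> 0 \<Longrightarrow> (-1) ^ k * Phi m k x \<ge> 0"
    and W: "W \<in> setC_K K" and lt: "sqrt (2 * K * real m) < \<nu> * real m"
  defines "g \<equiv> \<lambda>\<xi>. deriv (Psi Phi \<nu> m) (Aavg m W \<xi>)"
  shows "set_integrable lborel {a..b} g"
    and "L2 (Aavg m g)"
    and "0 \<le> Aavg m g x"
    and "L2_sqnorm (Aavg m g)
      \<le> ennreal ((sqrt (2 * K) * Phi m 2 (\<nu> * real m - sqrt (2 * K * real m)) * (real m)\<^sup>2)\<^sup>2)"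
proof -
  let ?\<rho> = "sqrt (2 * K * real m)"
  let ?D = "Phi m 2 (\<nu> * real m - ?\<rho>)"
  have LW: "L2 W" and K: "LINT x|lborel. (W x)\<^sup>2 = 2 * K"
    using W unfolding setC_K_def setC_def by auto
  have [measurable]: "W \<in> borel_measurable lborel" using LW by (simp add: L2_def)
  note g = Psi_deriv_Aavg_bounds[of Phi m, OF deriv signs W lt, folded g_def]
  have g_abs_le: "\<bar>g \<xi>\<bar> \<le> ?D * \<bar>Aavg m W \<xi>\<bar>" for \<xi>
    using g(2,3)[of \<xi>] setC_K_Aavg_bounds(1)[OF W] unfolding g_def by simp
  have "?D * \<bar>Aavg m W \<xi>\<bar> \<le> ?D * ?\<rho>" for \<xi>
    using signs[of 2 "\<nu> * real m - ?\<rho>"] lt setC_K_Aavg_bounds[OF W, of m \<xi>]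
    by (intro mult_left_mono) auto
  with g_abs_le have "\<bar>g \<xi>\<bar> \<le> ?D * ?\<rho>" for \<xi> by (meson order_trans)
  then show "set_integrable lborel {a..b} g"
    unfolding set_integrable_def using g(1)
    by (intro integrableI_bounded_set_indicator[where B = "?D * ?\<rho>"])
      (auto simp: emeasure_lborel_Icc_eq)
  have "L2_sqnorm g \<le> ennreal (?D\<^sup>2) * L2_sqnorm (Aavg m W)"
    using g_abs_le by (intro L2_sqnorm_le_dominated) simp
  also have "\<dots> \<le> ennreal (?D\<^sup>2) * ((real m)\<^sup>2 * ennreal (2 * K))"
    using L2_sqnorm_Aavg_le[of W m] L2_sqnorm_eq_integral[OF LW] K
    by (intro mult_left_mono) auto
  finally have g_sqnorm: "L2_sqnorm g \<le> ennreal (?D\<^sup>2) * ((real m)\<^sup>2 * ennreal (2 * K))" .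
  then have "L2 g"
    using g(1) by (simp add: L2_iff_sqnorm_finite ennreal_mult_less_top le_less_trans)
  then show "L2 (Aavg m g)" by (rule L2_Aavg)
  show "0 \<le> Aavg m g x"
    using g(1,2) unfolding g_def by (intro Aavg_nonneg) auto
  have "L2_sqnorm (Aavg m g) \<le> (real m)\<^sup>2 * L2_sqnorm g"
    using g(1) by (rule L2_sqnorm_Aavg_le)
  also have "\<dots> \<le> (real m)\<^sup>2 * (ennreal (?D\<^sup>2) * ((real m)\<^sup>2 * ennreal (2 * K)))"
    using g_sqnorm by (rule mult_left_mono) simp
  also have "\<dots> = ennreal ((sqrt (2 * K) * ?D * (real m)\<^sup>2)\<^sup>2)"
    using setC_K_nonneg[OF W]
    by (simp add: ennreal_mult[symmetric] power_mult_distrib mult_ac)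
  finally show "L2_sqnorm (Aavg m g) \<le> ennreal ((sqrt (2 * K) * ?D * (real m)\<^sup>2)\<^sup>2)" .
qed

section \<open>Convergence of the gradient series in \<open>L\<^sup>2\<close>\<close>

text \<open>The weighted Cauchy--Schwarz inequality \<open>(\<Sum> f\<^sub>n)\<^sup>2 \<le> (\<Sum> c\<^sub>n) (\<Sum> f\<^sub>n\<^sup>2 / c\<^sub>n)\<close> replaces
  Minkowski's inequality; the weights \<open>c\<^sub>n \<ge> a\<^sub>n\<close> are kept positive to avoid dividing by
  \<open>a\<^sub>n = 0\<close>.\<close>
lemma nn_integral_power2_sum_le:
  fixes f :: "nat \<Rightarrow> 'a \<Rightarrow> real"
  assumes meas: "\<And>n. f n \<in> borel_measurable M"
    and bound: "\<And>n. (\<integral>\<^sup>+x. ennreal ((f n x)\<^sup>2) \<partial>M) \<le> ennreal ((a n)\<^sup>2)"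
    and a: "\<And>n. 0 \<le> a n" "\<And>n. a n \<le> c n" and c: "\<And>n. 0 < c n"
  shows "(\<integral>\<^sup>+x. ennreal ((\<Sum>n\<in>F. f n x)\<^sup>2) \<partial>M) \<le> ennreal ((\<Sum>n\<in>F. c n) * (\<Sum>n\<in>F. a n))"
proof -
  have CS: "(\<Sum>n\<in>F. f n x)\<^sup>2 \<le> (\<Sum>n\<in>F. c n) * (\<Sum>n\<in>F. (f n x)\<^sup>2 / c n)" for x
  proof -
    have "sqrt (c n) \<noteq> 0" for n using c[of n] by simp
    then have "(\<Sum>n\<in>F. f n x) = (\<Sum>n\<in>F. sqrt (c n) * (f n x / sqrt (c n)))"
      by simp
    also have "\<dots>\<^sup>2 \<le> (\<Sum>n\<in>F. (sqrt (c n))\<^sup>2) * (\<Sum>n\<in>F. (f n x / sqrt (c n))\<^sup>2)"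
      by (rule Cauchy_Schwarz_ineq_sum)
    also have "\<dots> = (\<Sum>n\<in>F. c n) * (\<Sum>n\<in>F. (f n x)\<^sup>2 / c n)"
      using c by (simp add: less_imp_le power_divide)
    finally show ?thesis .
  qed
  have "(\<integral>\<^sup>+x. ennreal ((\<Sum>n\<in>F. f n x)\<^sup>2) \<partial>M)
      \<le> (\<integral>\<^sup>+x. ennreal (\<Sum>n\<in>F. c n) * (\<Sum>n\<in>F. ennreal ((f n x)\<^sup>2) * ennreal (1 / c n)) \<partial>M)"
  proof (intro nn_integral_mono)
    fix x
    have "ennreal ((\<Sum>n\<in>F. f n x)\<^sup>2) \<le> ennreal ((\<Sum>n\<in>F. c n) * (\<Sum>n\<in>F. (f n x)\<^sup>2 / c n))"
      using CS by (rule ennreal_leI)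
    also have "\<dots> = ennreal (\<Sum>n\<in>F. c n) * (\<Sum>n\<in>F. ennreal ((f n x)\<^sup>2) * ennreal (1 / c n))"
      using c by (simp add: ennreal_mult'[symmetric] ennreal_mult[symmetric] sum_nonneg
          less_imp_le divide_inverse)
    finally show "ennreal ((\<Sum>n\<in>F. f n x)\<^sup>2)
        \<le> ennreal (\<Sum>n\<in>F. c n) * (\<Sum>n\<in>F. ennreal ((f n x)\<^sup>2) * ennreal (1 / c n))" .
  qed
  also have "\<dots> = ennreal (\<Sum>n\<in>F. c n) *
      (\<Sum>n\<in>F. (\<integral>\<^sup>+x. ennreal ((f n x)\<^sup>2) \<partial>M) * ennreal (1 / c n))"
    using meas by (simp add: nn_integral_cmult nn_integral_sum nn_integral_multc)
  also have "\<dots> \<le> ennreal (\<Sum>n\<in>F. c n) * (\<Sum>n\<in>F. ennreal (a n))"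
  proof (intro mult_left_mono sum_mono)
    fix n
    have "(a n)\<^sup>2 / c n \<le> a n"
      using a[of n] c[of n] by (simp add: divide_le_eq power2_eq_square mult_left_mono)
    then have "ennreal ((a n)\<^sup>2) * ennreal (1 / c n) \<le> ennreal (a n)"
      using c[of n] by (simp add: ennreal_mult[symmetric] ennreal_leI)
    then show "(\<integral>\<^sup>+x. ennreal ((f n x)\<^sup>2) \<partial>M) * ennreal (1 / c n) \<le> ennreal (a n)"
      using bound[of n] by (meson mult_right_mono order_trans zero_le)
  qed simp
  also have "\<dots> = ennreal ((\<Sum>n\<in>F. c n) * (\<Sum>n\<in>F. a n))"
    using a c by (simp add: sum_nonneg less_imp_le ennreal_mult[symmetric])
  finally show ?thesis .
qed

lemma nn_integral_power2_suminf_le: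
  fixes f :: "nat \<Rightarrow> 'a \<Rightarrow> real"
  assumes meas [measurable]: "\<And>n. f n \<in> borel_measurable M"
    and nonneg: "\<And>n x. 0 \<le> f n x"
    and bound: "\<And>N. (\<integral>\<^sup>+x. ennreal ((\<Sum>n<N. f n x)\<^sup>2) \<partial>M) \<le> ennreal B"
  shows "AE x in M. summable (\<lambda>n. f n x)"
    and "(\<integral>\<^sup>+x. ennreal ((\<Sum>n. f n x)\<^sup>2) \<partial>M) \<le> ennreal B"
proof -
  let ?S = "\<lambda>N x. ennreal ((\<Sum>n<N. f n x)\<^sup>2)"
  have inc: "incseq ?S"
    by (intro monoI le_funI ennreal_leI power_mono sum_mono2 sum_nonneg nonneg) auto
  have sup_le: "(\<integral>\<^sup>+x. (SUP N. ?S N x) \<partial>M) \<le> ennreal B"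
    using bound by (simp add: nn_integral_monotone_convergence_SUP[OF inc] SUP_least)
  then have "AE x in M. (SUP N. ?S N x) \<noteq> \<infinity>"
    by (intro nn_integral_PInf_AE) (auto simp: top_unique)
  then show summable: "AE x in M. summable (\<lambda>n. f n x)"
  proof eventually_elim
    case (elim x)
    then obtain b where b: "(SUP N. ?S N x) = ennreal b" "0 \<le> b"
      by (cases "SUP N. ?S N x") auto
    show ?case
    proof (rule summableI_nonneg_bounded[where x = "sqrt b"])
      fix N
      have "?S N x \<le> ennreal b" using b(1) by (metis SUP_upper UNIV_I)
      then show "(\<Sum>n<N. f n x) \<le> sqrt b"
        using b(2) by (intro real_le_rsqrt) (simp add: ennreal_le_iff)
    qed (rule nonneg)
  qed
  have "AE x in M. ennreal ((\<Sum>n. f n x)\<^sup>2) = (SUP N. ?S N x)"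
    using summable
  proof eventually_elim
    case (elim x)
    have "(\<lambda>N. ?S N x) \<longlonglongrightarrow> ennreal ((\<Sum>n. f n x)\<^sup>2)"
      by (intro tendsto_ennrealI tendsto_power summable_LIMSEQ elim)
    moreover have "incseq (\<lambda>N. ?S N x)"
      using inc by (auto simp: mono_def le_fun_def)
    ultimately show ?case
      using LIMSEQ_SUP LIMSEQ_unique by blast
  qed
  then show "(\<integral>\<^sup>+x. ennreal ((\<Sum>n. f n x)\<^sup>2) \<partial>M) \<le> ennreal B"
    using sup_le by (subst nn_integral_cong_AE) auto
qed

lemma suminf_tail_tendsto_0:
  fixes c :: "nat \<Rightarrow> real"
  assumes "summable c"
  shows "(\<lambda>M. \<Sum>k. c (k + M)) \<longlonglongrightarrow> 0"
proof -
  have "(\<lambda>M. suminf c - (\<Sum>i<M. c i)) \<longlonglongrightarrow> suminf c - suminf c"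
    by (intro tendsto_diff tendsto_const summable_LIMSEQ assms)
  then show ?thesis using suminf_minus_initial_segment[OF assms] by simp
qed

lemma L2_convergent_series_of_tail_bounds:
  fixes f :: "nat \<Rightarrow> real \<Rightarrow> real" and T :: "nat \<Rightarrow> real"
  assumes meas [measurable]: "\<And>n. f n \<in> borel_measurable lborel"
    and nonneg: "\<And>n x. 0 \<le> f n x"
    and tail_bound: "\<And>N M. (\<integral>\<^sup>+x. ennreal ((\<Sum>k<N. f (k + M) x)\<^sup>2) \<partial>lborel) \<le> ennreal (T M)"
    and T: "\<And>M. 0 \<le> T M" "T \<longlonglongrightarrow> 0"
  shows "\<exists>G. L2 G \<and> (\<lambda>N. LINT x|lborel. ((\<Sum>n<N. f n x) - G x)\<^sup>2) \<longlonglongrightarrow> 0"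
proof -
  define G where "G x = (\<Sum>n. f n x)" for x
  have AE_summable: "AE x in lborel. summable (\<lambda>n. f n x)"
    using nn_integral_power2_suminf_le(1)[OF meas nonneg tail_bound[where M = 0]] by simp
  have sqnorm_le: "L2_sqnorm (\<lambda>x. (\<Sum>n<M. f n x) - G x) \<le> ennreal (T M)" for M
  proof -
    have "AE x in lborel. (\<Sum>k. f (k + M) x) = G x - (\<Sum>n<M. f n x)"
      using AE_summable
    proof eventually_elim
      case (elim x)
      show ?case using suminf_minus_initial_segment[OF elim, of M] by (simp add: G_def)
    qed
    then have "L2_sqnorm (\<lambda>x. (\<Sum>n<M. f n x) - G x)
        = (\<integral>\<^sup>+x. ennreal ((\<Sum>k. f (k + M) x)\<^sup>2) \<partial>lborel)"
      by (intro nn_integral_cong_AE) (auto simp: power2_commute)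
    also have "\<dots> \<le> ennreal (T M)"
      using tail_bound by (intro nn_integral_power2_suminf_le(2) nonneg) auto
    finally show ?thesis .
  qed
  have L2_diff_partial: "L2 (\<lambda>x. (\<Sum>n<M. f n x) - G x)" for M
    using sqnorm_le[of M] unfolding G_def by (auto simp: L2_iff_sqnorm_finite le_less_trans)
  have "L2 G"
    using L2_diff_partial[of 0] by (simp add: L2_def)
  moreover have "(LINT x|lborel. ((\<Sum>n<M. f n x) - G x)\<^sup>2) \<le> T M" for M
    using sqnorm_le[of M] L2_sqnorm_eq_integral[OF L2_diff_partial[of M]] T(1)[of M]
    by (simp add: ennreal_le_iff)
  then have "(\<lambda>N. LINT x|lborel. ((\<Sum>n<N. f n x) - G x)\<^sup>2) \<longlonglongrightarrow> 0"
    by (intro tendsto_sandwich[OF _ _ tendsto_const T(2)] always_eventually allI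
        integral_nonneg_AE AE_I2) auto
  ultimately show ?thesis by blast
qed

lemma L2_convergent_series:
  fixes f :: "nat \<Rightarrow> real \<Rightarrow> real" and a :: "nat \<Rightarrow> real"
  assumes meas: "\<And>n. f n \<in> borel_measurable lborel"
    and nonneg: "\<And>n x. 0 \<le> f n x"
    and bound: "\<And>n. L2_sqnorm (f n) \<le> ennreal ((a n)\<^sup>2)"
    and a: "\<And>n. 0 \<le> a n" "summable a"
  shows "\<exists>G. L2 G \<and> (\<lambda>N. LINT x|lborel. ((\<Sum>n<N. f n x) - G x)\<^sup>2) \<longlonglongrightarrow> 0"
proof (rule L2_convergent_series_of_tail_bounds[OF meas nonneg])
  define c where "c n = a n + (1/2) ^ n" for n
  have c: "0 < c n" "a n \<le> c n" for n
    using a(1)[of n] by (auto simp: c_def add_nonneg_pos)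
  have "summable c" unfolding c_def by (intro summable_add a summable_geometric) simp
  let ?T = "\<lambda>M. (\<Sum>k. c (k + M)) * (\<Sum>k. a (k + M))"
  show "0 \<le> ?T M" for M
    using a c \<open>summable c\<close>
    by (intro mult_nonneg_nonneg suminf_nonneg summable_ignore_initial_segment) (auto intro: less_imp_le)
  have "?T \<longlonglongrightarrow> 0 * 0"
    by (intro tendsto_mult suminf_tail_tendsto_0 \<open>summable c\<close> a)
  then show "?T \<longlonglongrightarrow> 0" by simp
  fix N M
  have "(\<integral>\<^sup>+x. ennreal ((\<Sum>k<N. f (k + M) x)\<^sup>2) \<partial>lborel)
      \<le> ennreal ((\<Sum>k<N. c (k + M)) * (\<Sum>k<N. a (k + M)))"
    using meas bound a c by (intro nn_integral_power2_sum_le) auto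
  also have "\<dots> \<le> ennreal (?T M)"
    using a c \<open>summable c\<close>
    by (intro ennreal_leI mult_mono sum_le_suminf summable_ignore_initial_segment sum_nonneg
        suminf_nonneg) (auto intro: less_imp_le)
  finally show "(\<integral>\<^sup>+x. ennreal ((\<Sum>k<N. f (k + M) x)\<^sup>2) \<partial>lborel) \<le> ennreal (?T M)" .
qed

lemma Psi_gradient_series_L2:
  fixes \<nu> K :: real and Phi :: "nat \<Rightarrow> nat \<Rightarrow> real \<Rightarrow> real"
  assumes nu: "0 < \<nu>" and K: "K < \<nu>\<^sup>2 / 2"
    and deriv: "\<And>m k x. m \<ge> 1 \<Longrightarrow> k < 4 \<Longrightarrow> x \<ge> 0 \<Longrightarrow>
               (Phi m k has_real_derivative Phi m (Suc k) x) (at x within {0..})"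
    and signs: "\<And>m k x. m \<ge> 1 \<Longrightarrow> k \<le> 4 \<Longrightarrow> x \<ge> 0 \<Longrightarrow> (-1) ^ k * Phi m k x \<ge> 0"
    and summable: "summable (\<lambda>n. let m = Suc n in
                 Phi m 2 (\<nu> * real m - sqrt (2 * K * real m)) * (real m)\<^sup>2)"
    and W: "W \<in> setC_K K"
  shows "\<exists>G. L2 G \<and>
    (\<lambda>N. LINT x|lborel. ((\<Sum>m=1..N. Aavg m (\<lambda>\<xi>. deriv (Psi Phi \<nu> m) (Aavg m W \<xi>)) x) - G x)\<^sup>2)
      \<longlonglongrightarrow> 0"
proof -
  let ?t = "\<lambda>m. \<nu> * real m - sqrt (2 * K * real m)"
  let ?f = "\<lambda>n. Aavg (Suc n) (\<lambda>\<xi>. deriv (Psi Phi \<nu> (Suc n)) (Aavg (Suc n) W \<xi>))"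
  have "\<exists>G. L2 G \<and> (\<lambda>N. LINT x|lborel. ((\<Sum>n<N. ?f n x) - G x)\<^sup>2) \<longlonglongrightarrow> 0"
  proof (rule L2_convergent_series[where
        a = "\<lambda>n. sqrt (2 * K) * Phi (Suc n) 2 (?t (Suc n)) * (real (Suc n))\<^sup>2"])
    fix n
    have "1 \<le> Suc n" by simp
    note gradient_term = Psi_gradient_term[of Phi "Suc n",
        OF deriv[OF this] signs[OF this] W sqrt_2Km_less[OF nu K this]]
    show "?f n \<in> borel_measurable lborel" using gradient_term(2) by (simp add: L2_def)
    show "0 \<le> ?f n x" for x by (rule gradient_term(3))
    show "L2_sqnorm (?f n) \<le> ennreal ((sqrt (2 * K) * Phi (Suc n) 2 (?t (Suc n)) * (real (Suc n))\<^sup>2)\<^sup>2)"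
      by (rule gradient_term(4))
    show "0 \<le> sqrt (2 * K) * Phi (Suc n) 2 (?t (Suc n)) * (real (Suc n))\<^sup>2"
      using signs[of "Suc n" 2 "?t (Suc n)"] sqrt_2Km_less[OF nu K, of "Suc n"] setC_K_nonneg[OF W]
      by simp
  next
    show "summable (\<lambda>n. sqrt (2 * K) * Phi (Suc n) 2 (?t (Suc n)) * (real (Suc n))\<^sup>2)"
      using summable_mult[OF summable, of "sqrt (2 * K)"] by (simp add: Let_def mult.assoc)
  qed
  then show ?thesis by (simp add: sum.atLeast1_atMost_eq)
qed

theorem lemma2p5:
  fixes \<nu> K \<gamma> :: real and Phi :: "nat \<Rightarrow> nat \<Rightarrow> real \<Rightarrow> real"
  assumes nu: "\<nu> > 0"
    and K: "0 < K" "K < \<nu>\<^sup>2 / 2"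
    and gamma: "5/2 < \<gamma>" "\<gamma> < 3"
    and C4: "\<And>m k x. m \<ge> 1 \<Longrightarrow> k < 4 \<Longrightarrow> x \<ge> 0 \<Longrightarrow>
               (Phi m k has_real_derivative Phi m (Suc k) x) (at x within {0..})"
    and C4cont: "\<And>m. m \<ge> 1 \<Longrightarrow> continuous_on {0..} (Phi m 4)"
    and signs: "\<And>m k x. m \<ge> 1 \<Longrightarrow> k \<le> 4 \<Longrightarrow> x \<ge> 0 \<Longrightarrow> (-1) ^ k * Phi m k x \<ge> 0"
    and strict: "\<And>k s. k \<le> 4 \<Longrightarrow> s > 0 \<Longrightarrow> (-1) ^ k * Phi 1 k s > 0"
    and sum1: "summable (\<lambda>n. let m = Suc n in
                 Phi m 1 (\<nu> * real m - sqrt (2 * K * real m)) * real m)"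
    and sum2: "summable (\<lambda>n. let m = Suc n in
                 Phi m 2 (\<nu> * real m - sqrt (2 * K * real m)) * (real m)\<^sup>2)"
    and sum3: "summable (\<lambda>n. let m = Suc n in Phi m 2 (\<nu> * real m) * real m powr \<gamma>)"
    and sum4: "summable (\<lambda>n. let m = Suc n in
                 Phi m 3 (\<nu> * real m - sqrt (2 * K * real m)) * real m powr (3/2))"
  shows "\<forall>W \<in> setC_K K.
     (\<forall>m \<ge> 1. \<forall>\<xi>. 0 \<le> Aavg m W \<xi> \<and> Aavg m W \<xi> < \<nu> * real m) \<and>
     (\<forall>m \<ge> 1. (\<lambda>\<xi>. deriv (Psi Phi \<nu> m) (Aavg m W \<xi>)) \<in> borel_measurable lborel \<and>
        (\<forall>a b. set_integrable lborel {a..b} (\<lambda>\<xi>. deriv (Psi Phi \<nu> m) (Aavg m W \<xi>)))) \<and>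
     (\<forall>m \<ge> 1. L2 (Aavg m (\<lambda>\<xi>. deriv (Psi Phi \<nu> m) (Aavg m W \<xi>)))) \<and>
     (\<exists>G. L2 G \<and>
        (\<lambda>N. LINT x|lborel.
           ((\<Sum>m=1..N. Aavg m (\<lambda>\<xi>. deriv (Psi Phi \<nu> m) (Aavg m W \<xi>)) x) - G x)\<^sup>2)
        \<longlonglongrightarrow> 0)"
proof (intro ballI conjI allI impI)
  fix W and m :: nat and \<xi> assume W: "W \<in> setC_K K" and m: "1 \<le> m"
  show "0 \<le> Aavg m W \<xi>" using setC_K_Aavg_bounds(1)[OF W] .
  show "Aavg m W \<xi> < \<nu> * real m"
    using setC_K_Aavg_bounds(2)[OF W] sqrt_2Km_less[OF nu K(2) m] by (rule order.strict_trans1)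
next
  fix W and m :: nat and a b assume W: "W \<in> setC_K K" and m: "1 \<le> m"
  note assms_m = C4[OF m] signs[OF m] W sqrt_2Km_less[OF nu K(2) m]
  show "(\<lambda>\<xi>. deriv (Psi Phi \<nu> m) (Aavg m W \<xi>)) \<in> borel_measurable lborel"
    by (rule Psi_deriv_Aavg_bounds(1)[of Phi m, OF assms_m])
  show "set_integrable lborel {a..b} (\<lambda>\<xi>. deriv (Psi Phi \<nu> m) (Aavg m W \<xi>))"
    by (rule Psi_gradient_term(1)[of Phi m, OF assms_m])
  show "L2 (Aavg m (\<lambda>\<xi>. deriv (Psi Phi \<nu> m) (Aavg m W \<xi>)))"
    by (rule Psi_gradient_term(2)[of Phi m, OF assms_m])
next
  fix W assume "W \<in> setC_K K"
  then show "\<exists>G. L2 G \<and> (\<lambda>N. LINT x|lborel.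
      ((\<Sum>m=1..N. Aavg m (\<lambda>\<xi>. deriv (Psi Phi \<nu> m) (Aavg m W \<xi>)) x) - G x)\<^sup>2) \<longlonglongrightarrow> 0"
    using Psi_gradient_series_L2[OF nu K(2) C4 signs sum2] by blast
qed

end
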